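(* Let $S$ be a semigroup, $T$ an ideal of $S$ and $U=S/T$ the Rees quotient. Let $\langle A\mid R\rangle$ be a finite complete semigroup presentation of $T$ and $\langle B\mid Q\rangle$ a finite complete semigroup presentation of $U$, where $A\cap B=\emptyset$. Let $B_0\subseteq B$ be the set of letters representing the zero of $U$, and $Q_0\subseteq Q$ the set of rules $(u,v)$ for which $u$ (equivalently $v$) represents the zero of $U$; assume $B_0$ contains a letter $0$ which is the unique $Q$-irreducible word representing the zero of $U$. Words over $A\cup (B\setminus B_0)$ represent elements of $S$ in the natural way (letters of $A$ represent elements of $T$ via the given presentation; letters of $B\setminus B_0$ represent the corresponding nonzero elements of $U$, identified with elements of $S\setminus T$). For each $u\in(B\setminus B_0)^+$ representing the zero of $U$ fix $\rho(u)\in A^+$ with $u=\rho(u)$ in $S$, and for $a\in A$, $b\in B\setminus B_0$ fix $\sigma(a,b),\pi(b,a)\in A^+$ with $ab=\sigma(a,b)$ and $ba=\pi(b,a)$ in $S$. Let $V$ be the rewriting system on $A\cup(B\setminus B_0)$ consisting of $R$, $Q\setminus Q_0$, and the rules $u\to\rho(u)$ (for $u\in(B\setminus B_0)^+$ such that $(u,v)\in Q_0$ or $(v,u)\in Q_0$ for some $v$), $ab\to\sigma(a,b)$ and $ba\to\pi(b,a)$ ($a\in A$, $b\in B\setminus B_0$). Then for every word $w\in(A\cup B\setminus B_0)^+$: (i) if $w$ represents an element of $T$, then there is $w'\in A^+$ with $w\to_V^* w'$; (ii) otherwise $w\in(B\setminus B_0)^+$.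
   Context: For a rewriting system $V$, $\to_V$ denotes one-step reduction ($w_1uw_2\to_V w_1vw_2$ for a rule $u\to v$ in $V$) and $\to_V^*$ its reflexive transitive closure. A rewriting system is complete if it is noetherian (no infinite reduction chains) and confluent. The Rees quotient $S/T$ identifies all elements of $T$ to a single zero. *)

theory Defs
  imports Main
begin

definition wplus :: "'l set \<Rightarrow> 'l list set" where
  "wplus X = lists X - {[]}"

definition rstep :: "('l list \<times> 'l list) set \<Rightarrow> ('l list \<times> 'l list) set" where
  "rstep V = {(w1 @ u @ w2, w1 @ v @ w2) | w1 u v w2. (u, v) \<in> V}"

definition rconv :: "('l list \<times> 'l list) set \<Rightarrow> ('l list \<times> 'l list) set" where
  "rconv V = (rstep V \<union> (rstep V)\<inverse>)\<^sup>*"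

definition noetherian_on :: "'l set \<Rightarrow> ('l list \<times> 'l list) set \<Rightarrow> bool" where
  "noetherian_on X V \<longleftrightarrow>
     \<not> (\<exists>f :: nat \<Rightarrow> 'l list. f 0 \<in> lists X \<and> (\<forall>i. (f i, f (Suc i)) \<in> rstep V))"

definition confluent_on :: "'l set \<Rightarrow> ('l list \<times> 'l list) set \<Rightarrow> bool" where
  "confluent_on X V \<longleftrightarrow>
     (\<forall>w \<in> lists X. \<forall>x y. (w, x) \<in> (rstep V)\<^sup>* \<and> (w, y) \<in> (rstep V)\<^sup>* \<longrightarrow>
        (\<exists>z. (x, z) \<in> (rstep V)\<^sup>* \<and> (y, z) \<in> (rstep V)\<^sup>*))"

definition complete_on :: "'l set \<Rightarrow> ('l list \<times> 'l list) set \<Rightarrow> bool" where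
  "complete_on X V \<longleftrightarrow> noetherian_on X V \<and> confluent_on X V"

definition irreducible_word :: "('l list \<times> 'l list) set \<Rightarrow> 'l list \<Rightarrow> bool" where
  "irreducible_word V w \<longleftrightarrow> \<not> (\<exists>w'. (w, w') \<in> rstep V)"

fun weval :: "('b \<Rightarrow> 'b \<Rightarrow> 'b) \<Rightarrow> ('l \<Rightarrow> 'b) \<Rightarrow> 'l list \<Rightarrow> 'b" where
  "weval m f [] = undefined"
| "weval m f (x # xs) = foldl (\<lambda>acc l. m acc (f l)) (f x) xs"

definition is_presentation ::
  "('b \<Rightarrow> 'b \<Rightarrow> 'b) \<Rightarrow> 'b set \<Rightarrow> ('l \<Rightarrow> 'b) \<Rightarrow> 'l set \<Rightarrow> ('l list \<times> 'l list) set \<Rightarrow> bool" where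
  "is_presentation m X f A R \<longleftrightarrow>
     R \<subseteq> wplus A \<times> wplus A \<and>
     weval m f ` wplus A = X \<and>
     (\<forall>u \<in> wplus A. \<forall>v \<in> wplus A. weval m f u = weval m f v \<longleftrightarrow> (u, v) \<in> rconv R)"

definition finite_complete_presentation ::
  "('b \<Rightarrow> 'b \<Rightarrow> 'b) \<Rightarrow> 'b set \<Rightarrow> ('l \<Rightarrow> 'b) \<Rightarrow> 'l set \<Rightarrow> ('l list \<times> 'l list) set \<Rightarrow> bool" where
  "finite_complete_presentation m X f A R \<longleftrightarrow>
     finite A \<and> finite R \<and> is_presentation m X f A R \<and> complete_on A R"

text \<open>The semigroup S is the whole type 'a.\<close>
definition semigroup_ideal :: "'a::semigroup_mult set \<Rightarrow> bool" where
  "semigroup_ideal T \<longleftrightarrow> T \<noteq> {} \<and> (\<forall>s t. t \<in> T \<longrightarrow> s * t \<in> T \<and> t * s \<in> T)"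

text \<open>Rees quotient S/T: elements Some s (s not in T) and None (the zero, i.e. the class T).\<close>
definition rees_carrier :: "'a set \<Rightarrow> 'a option set" where
  "rees_carrier T = insert None (Some ` (- T))"

definition rees_mult :: "'a::semigroup_mult set \<Rightarrow> 'a option \<Rightarrow> 'a option \<Rightarrow> 'a option" where
  "rees_mult T x y = (case (x, y) of
      (Some a, Some b) \<Rightarrow> (if a * b \<in> T then None else Some (a * b))
    | _ \<Rightarrow> None)"

end

theory Submission
  imports Defs
begin

text \<open>A word containing a letter of \<open>A\<close> represents an element of the ideal \<open>T\<close>, and the rules
  \<open>ab \<rightarrow> \<sigma>(a,b)\<close>, \<open>ba \<rightarrow> \<pi>(b,a)\<close> let the \<open>A\<close>-letters absorb their neighbours one at a time until
  the word lies in \<open>A\<^sup>+\<close>. A word over \<open>B \<setminus> B\<^sub>0\<close> representing an element of \<open>T\<close> represents the zero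
  of \<open>U\<close>; as \<open>0\<close> is the only irreducible such word, it is \<open>Q\<close>-reducible. A rule with zero left-hand
  side is replaced in \<open>V\<close> by \<open>u \<rightarrow> \<rho>(u)\<close>, which creates an \<open>A\<close>-letter; any other rule of \<open>Q\<close> is in \<open>V\<close>
  and keeps the word over \<open>B \<setminus> B\<^sub>0\<close> and zero in \<open>U\<close>, so Noetherian induction along \<open>Q\<close> concludes.\<close>

lemma weval_snoc: "xs \<noteq> [] \<Longrightarrow> weval m f (xs @ [x]) = m (weval m f xs) (f x)"
  by (cases xs) auto

lemma weval_mem_ideal:
  assumes "semigroup_ideal T" "x \<in> set w" "f x \<in> (T :: 'a::semigroup_mult set)"
  shows "weval (*) f w \<in> T"
  using assms(2)
proof (induction w rule: rev_induct)
  case (snoc y w)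
  with assms show ?case
    by (cases "w = []") (auto simp: weval_snoc semigroup_ideal_def)
qed simp

lemma weval_absorbing_zero:
  assumes "\<And>y. m \<zeta> y = \<zeta>" "\<And>y. m y \<zeta> = \<zeta>" "x \<in> set w" "f x = \<zeta>"
  shows "weval m f w = \<zeta>"
  using assms(3)
proof (induction w rule: rev_induct)
  case (snoc y w)
  with assms show ?case
    by (cases "w = []") (auto simp: weval_snoc)
qed simp

lemma rees_mult_None [simp]: "rees_mult T None y = None" "rees_mult T x None = None"
  by (simp_all add: rees_mult_def split: option.split)

lemma weval_rees_mult:
  assumes ideal: "semigroup_ideal T"
    and "w \<noteq> []"
    and letters: "\<And>x. x \<in> set w \<Longrightarrow> \<psi> x = Some (f x) \<and> f x \<notin> T"
  shows "weval (rees_mult T) \<psi> w =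
           (if weval (*) f w \<in> T then None else Some (weval (*) f w))"
  using assms(2) letters
proof (induction w rule: rev_induct)
  case (snoc x w)
  show ?case
  proof (cases "w = []")
    case False
    have "weval (*) f w * f x \<in> T" if "weval (*) f w \<in> T"
      using ideal that by (simp add: semigroup_ideal_def)
    with False snoc show ?thesis
      by (auto simp: weval_snoc rees_mult_def)
  qed (use snoc in auto)
qed simp

lemma presentation_letter_mem:
  assumes "is_presentation m X f A R" "a \<in> A"
  shows "f a \<in> X"
proof -
  have "[a] \<in> wplus A"
    using assms(2) by (simp add: wplus_def)
  then have "weval m f [a] \<in> X"
    using assms(1) unfolding is_presentation_def by blast
  then show ?thesis
    by simp
qed

lemma rstepI: "(u, v) \<in> V \<Longrightarrow> (w1 @ u @ w2, w1 @ v @ w2) \<in> rstep V"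
  unfolding rstep_def by blast

lemma presentation_rstep:
  assumes pres: "is_presentation m X f A R" and w: "w \<in> wplus A" and step: "(w, w') \<in> rstep R"
  shows "w' \<in> wplus A \<and> weval m f w' = weval m f w"
proof -
  obtain w1 u v w2 where "w = w1 @ u @ w2" "w' = w1 @ v @ w2" "(u, v) \<in> R"
    using step unfolding rstep_def by blast
  moreover have "R \<subseteq> wplus A \<times> wplus A"
    using pres by (simp add: is_presentation_def)
  ultimately have w': "w' \<in> wplus A"
    using w by (auto simp: wplus_def)
  have "(w, w') \<in> rconv R"
    using step by (auto simp: rconv_def)
  with pres w w' have "weval m f w = weval m f w'"
    unfolding is_presentation_def by blast
  with w' show ?thesis
    by simp
qed

lemma noetherian_on_imp_wf:
  assumes "noetherian_on X V"
  shows "wf {(y, x). x \<in> lists X \<and> (x, y) \<in> rstep V}"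
proof (rule ccontr)
  assume "\<not> ?thesis"
  then obtain f where "\<And>i. (f (Suc i), f i) \<in> {(y, x). x \<in> lists X \<and> (x, y) \<in> rstep V}"
    using wf_iff_no_infinite_down_chain by blast
  with assms show False
    unfolding noetherian_on_def by blast
qed

lemma split_list_at_change:
  assumes "\<exists>x \<in> set w. P x" "\<exists>x \<in> set w. \<not> P x"
  shows "\<exists>xs a b ys. w = xs @ [a, b] @ ys \<and> P a \<noteq> P b"
  using assms
proof (induction w)
  case (Cons x w)
  show ?case
  proof (cases w)
    case (Cons y w')
    show ?thesis
    proof (cases "P x = P y")
      case True
      with Cons.prems \<open>w = y # w'\<close> obtain xs a b ys where "w = xs @ [a, b] @ ys" "P a \<noteq> P b"
        using Cons.IH by fastforce
      then show ?thesis
        by (metis append_Cons)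
    next
      case False
      with \<open>w = y # w'\<close> show ?thesis
        by (metis append_Cons append_Nil)
    qed
  qed (use Cons.prems in auto)
qed simp

lemma rtrancl_rstep_into_wplus:
  assumes left: "\<And>a c. a \<in> A \<Longrightarrow> c \<in> C \<Longrightarrow> \<exists>s \<in> wplus A. ([a, c], s) \<in> V"
    and right: "\<And>a c. a \<in> A \<Longrightarrow> c \<in> C \<Longrightarrow> \<exists>s \<in> wplus A. ([c, a], s) \<in> V"
  shows "w \<in> lists (A \<union> C) \<Longrightarrow> set w \<inter> A \<noteq> {} \<Longrightarrow> \<exists>w' \<in> wplus A. (w, w') \<in> (rstep V)\<^sup>*"
proof (induction w rule: measure_induct_rule[where f = "\<lambda>w. length (filter (\<lambda>x. x \<notin> A) w)"])
  case (less w)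
  show ?case
  proof (cases "set w \<subseteq> A")
    case True
    with less.prems show ?thesis
      by (auto simp: wplus_def)
  next
    case False
    then obtain xs a b ys where w: "w = xs @ [a, b] @ ys" and ab: "(a \<in> A) \<noteq> (b \<in> A)"
      using split_list_at_change[of w "\<lambda>x. x \<in> A"] less.prems(2) by blast
    have "\<exists>s \<in> wplus A. ([a, b], s) \<in> V"
      using ab left right less.prems(1) w by (cases "a \<in> A") auto
    then obtain s where ab_s: "([a, b], s) \<in> V" and s: "s \<noteq> []" "set s \<subseteq> A"
      by (auto simp: wplus_def)
    let ?w' = "xs @ s @ ys"
    have "(w, ?w') \<in> rstep V"
      using rstepI[OF ab_s] w by simp
    moreover have "\<exists>w'' \<in> wplus A. (?w', w'') \<in> (rstep V)\<^sup>*"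
    proof (rule less.IH)
      have "filter (\<lambda>x. x \<notin> A) s = []"
        using s by (auto simp: filter_empty_conv)
      with w ab show "length (filter (\<lambda>x. x \<notin> A) ?w') < length (filter (\<lambda>x. x \<notin> A) w)"
        by auto
      show "?w' \<in> lists (A \<union> C)" "set ?w' \<inter> A \<noteq> {}"
        using less.prems(1) w s by (auto simp: neq_Nil_conv)
    qed
    ultimately show ?thesis
      by (meson converse_rtrancl_into_rtrancl)
  qed
qed

lemma zero_words_reduce_into_wplus:
  assumes zero: "\<And>y. m \<zeta> y = \<zeta>" "\<And>y. m y \<zeta> = \<zeta>"
    and pres: "is_presentation m X \<psi> B Q"
    and noeth: "noetherian_on B Q"
    and zero_normal_form: "\<And>w. w \<in> wplus B \<Longrightarrow> weval m \<psi> w = \<zeta> \<Longrightarrow> irreducible_word Q w \<Longrightarrow> w = [z]"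
    and z: "\<psi> z = \<zeta>"
    and C: "C = {b \<in> B. \<psi> b \<noteq> \<zeta>}"
    and nonzero_rules: "\<And>u v. (u, v) \<in> Q \<Longrightarrow> weval m \<psi> u \<noteq> \<zeta> \<Longrightarrow> (u, v) \<in> V"
    and zero_rules: "\<And>u v. (u, v) \<in> Q \<Longrightarrow> u \<in> wplus C \<Longrightarrow> weval m \<psi> u = \<zeta> \<Longrightarrow>
                       \<exists>s \<in> wplus A. (u, s) \<in> V"
    and left: "\<And>a c. a \<in> A \<Longrightarrow> c \<in> C \<Longrightarrow> \<exists>s \<in> wplus A. ([a, c], s) \<in> V"
    and right: "\<And>a c. a \<in> A \<Longrightarrow> c \<in> C \<Longrightarrow> \<exists>s \<in> wplus A. ([c, a], s) \<in> V"
  shows "w \<in> wplus C \<Longrightarrow> weval m \<psi> w = \<zeta> \<Longrightarrow> \<exists>w' \<in> wplus A. (w, w') \<in> (rstep V)\<^sup>*"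
  using noetherian_on_imp_wf[OF noeth]
proof (induction w rule: wf_induct_rule)
  case (less w)
  have wB: "w \<in> wplus B"
    using less.prems(1) C by (auto simp: wplus_def)
  have "w \<noteq> [z]"
    using less.prems(1) C z by (auto simp: wplus_def)
  then obtain w1 u v w2 where w: "w = w1 @ u @ w2" and uv: "(u, v) \<in> Q"
    using zero_normal_form[OF wB less.prems(2)] unfolding irreducible_word_def rstep_def by blast
  have "u \<in> wplus B"
    using pres uv by (auto simp: is_presentation_def)
  then have uC: "u \<in> wplus C"
    using less.prems(1) w C by (auto simp: wplus_def)
  show ?case
  proof (cases "weval m \<psi> u = \<zeta>")
    case True
    then obtain s where u_s: "(u, s) \<in> V" and s: "s \<noteq> []" "set s \<subseteq> A"
      using zero_rules[OF uv uC] by (auto simp: wplus_def)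
    have "(w, w1 @ s @ w2) \<in> rstep V"
      using rstepI[OF u_s] w by simp
    moreover have "\<exists>w' \<in> wplus A. (w1 @ s @ w2, w') \<in> (rstep V)\<^sup>*"
      by (rule rtrancl_rstep_into_wplus[OF left right])
        (use less.prems(1) w s in \<open>auto simp: wplus_def neq_Nil_conv\<close>)
    ultimately show ?thesis
      by (meson converse_rtrancl_into_rtrancl)
  next
    case False
    let ?w' = "w1 @ v @ w2"
    have v: "v \<in> wplus B" "weval m \<psi> v = weval m \<psi> u"
      using presentation_rstep[OF pres \<open>u \<in> wplus B\<close> rstepI[OF uv, of "[]" "[]", simplified]] by simp_all
    have "v \<in> wplus C"
    proof -
      have "\<psi> x \<noteq> \<zeta>" if "x \<in> set v" for x
        using weval_absorbing_zero[where m = m and \<zeta> = \<zeta> and f = \<psi>, OF zero that] False v(2) by auto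
      with v(1) C show ?thesis
        by (auto simp: wplus_def)
    qed
    with less.prems(1) w have w'C: "?w' \<in> wplus C"
      by (auto simp: wplus_def)
    have Q_step: "(w, ?w') \<in> rstep Q"
      using rstepI[OF uv] w by simp
    then have "weval m \<psi> ?w' = \<zeta>"
      using presentation_rstep[OF pres wB] less.prems(2) by simp
    moreover have "(?w', w) \<in> {(y, x). x \<in> lists B \<and> (x, y) \<in> rstep Q}"
      using Q_step wB by (simp add: wplus_def)
    ultimately obtain w'' where "w'' \<in> wplus A" "(?w', w'') \<in> (rstep V)\<^sup>*"
      using less.IH w'C by blast
    moreover have "(w, ?w') \<in> rstep V"
      using rstepI[OF nonzero_rules[OF uv False]] w by simp
    ultimately show ?thesis
      by (meson converse_rtrancl_into_rtrancl)
  qed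
qed

theorem lemma3p1:
  fixes T :: "'a::semigroup_mult set"
    and A B :: "'l set"
    and R Q :: "('l list \<times> 'l list) set"
    and \<phi> :: "'l \<Rightarrow> 'a" and \<psi> :: "'l \<Rightarrow> 'a option"
    and \<rho> :: "'l list \<Rightarrow> 'l list" and \<sigma> \<pi> :: "'l \<Rightarrow> 'l \<Rightarrow> 'l list"
    and B0 :: "'l set" and Q0 :: "('l list \<times> 'l list) set"
    and \<theta> :: "'l \<Rightarrow> 'a" and V :: "('l list \<times> 'l list) set"
  assumes ideal: "semigroup_ideal T"
    and presT: "finite_complete_presentation (*) T \<phi> A R"
    and presU: "finite_complete_presentation (rees_mult T) (rees_carrier T) \<psi> B Q"
    and disj: "A \<inter> B = {}"
    and B0_def: "B0 = {b \<in> B. \<psi> b = None}"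
    and Q0_def: "Q0 = {(u, v) \<in> Q. weval (rees_mult T) \<psi> u = None}"
    and zero_letter: "\<exists>z \<in> B0. \<forall>w \<in> wplus B.
          (weval (rees_mult T) \<psi> w = None \<and> irreducible_word Q w) \<longleftrightarrow> w = [z]"
    and \<theta>_def: "\<theta> = (\<lambda>l. if l \<in> A then \<phi> l else the (\<psi> l))"
    and \<rho>: "\<And>u. u \<in> wplus (B - B0) \<Longrightarrow> weval (rees_mult T) \<psi> u = None \<Longrightarrow>
              \<rho> u \<in> wplus A \<and> weval (*) \<theta> (\<rho> u) = weval (*) \<theta> u"
    and \<sigma>: "\<And>a b. a \<in> A \<Longrightarrow> b \<in> B - B0 \<Longrightarrow>
              \<sigma> a b \<in> wplus A \<and> weval (*) \<theta> (\<sigma> a b) = \<theta> a * \<theta> b"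
    and \<pi>: "\<And>a b. a \<in> A \<Longrightarrow> b \<in> B - B0 \<Longrightarrow>
              \<pi> b a \<in> wplus A \<and> weval (*) \<theta> (\<pi> b a) = \<theta> b * \<theta> a"
    and V_def: "V = R \<union> (Q - Q0)
          \<union> {(u, \<rho> u) | u. u \<in> wplus (B - B0) \<and> (\<exists>v. (u, v) \<in> Q0 \<or> (v, u) \<in> Q0)}
          \<union> {([a, b], \<sigma> a b) | a b. a \<in> A \<and> b \<in> B - B0}
          \<union> {([b, a], \<pi> b a) | a b. a \<in> A \<and> b \<in> B - B0}"
  shows "\<forall>w \<in> wplus (A \<union> (B - B0)).
           (weval (*) \<theta> w \<in> T \<longrightarrow> (\<exists>w' \<in> wplus A. (w, w') \<in> (rstep V)\<^sup>*)) \<and>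
           (weval (*) \<theta> w \<notin> T \<longrightarrow> w \<in> wplus (B - B0))"
proof -
  have presU': "is_presentation (rees_mult T) (rees_carrier T) \<psi> B Q" "noetherian_on B Q"
    using presU by (simp_all add: finite_complete_presentation_def complete_on_def)
  have \<theta>_A: "\<theta> a \<in> T" if "a \<in> A" for a
    using presentation_letter_mem[of "(*)" T \<phi> A R a] presT that
    by (simp add: \<theta>_def finite_complete_presentation_def)
  have \<theta>_B: "\<psi> b = Some (\<theta> b) \<and> \<theta> b \<notin> T" if "b \<in> B - B0" for b
    using presentation_letter_mem[OF presU'(1), of b] that disj
    by (auto simp: B0_def \<theta>_def rees_carrier_def)
  have left: "\<exists>s \<in> wplus A. ([a, b], s) \<in> V" and right: "\<exists>s \<in> wplus A. ([b, a], s) \<in> V"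
    if "a \<in> A" "b \<in> B - B0" for a b
    using \<sigma>[OF that] \<pi>[OF that] that unfolding V_def by blast+
  obtain z where "z \<in> B0" and z: "\<forall>w \<in> wplus B.
      (weval (rees_mult T) \<psi> w = None \<and> irreducible_word Q w) \<longleftrightarrow> w = [z]"
    using zero_letter by blast
  have zero_words: "\<exists>w' \<in> wplus A. (w, w') \<in> (rstep V)\<^sup>*"
    if "w \<in> wplus (B - B0)" "weval (rees_mult T) \<psi> w = None" for w
  proof (rule zero_words_reduce_into_wplus[OF _ _ presU' _ _ _ _ _ left right that])
    show "\<psi> z = None" "B - B0 = {b \<in> B. \<psi> b \<noteq> None}"
      using \<open>z \<in> B0\<close> by (auto simp: B0_def)
    show "\<exists>s \<in> wplus A. (u, s) \<in> V"
      if "(u, v) \<in> Q" "u \<in> wplus (B - B0)" "weval (rees_mult T) \<psi> u = None" for u v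
      using that \<rho>[OF that(2,3)] unfolding V_def Q0_def by blast
  qed (use z in \<open>auto simp: V_def Q0_def\<close>)
  show ?thesis
  proof
    fix w assume w: "w \<in> wplus (A \<union> (B - B0))"
    show "(weval (*) \<theta> w \<in> T \<longrightarrow> (\<exists>w' \<in> wplus A. (w, w') \<in> (rstep V)\<^sup>*)) \<and>
          (weval (*) \<theta> w \<notin> T \<longrightarrow> w \<in> wplus (B - B0))"
    proof (cases "set w \<inter> A = {}")
      case True
      then have wC: "w \<in> wplus (B - B0)"
        using w by (auto simp: wplus_def)
      have "weval (rees_mult T) \<psi> w =
          (if weval (*) \<theta> w \<in> T then None else Some (weval (*) \<theta> w))"
        by (rule weval_rees_mult[OF ideal]) (use wC \<theta>_B in \<open>auto simp: wplus_def\<close>)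
      with wC show ?thesis
        using zero_words by auto
    next
      case False
      then obtain a where "a \<in> set w" "a \<in> A"
        by blast
      then have "weval (*) \<theta> w \<in> T"
        by (intro weval_mem_ideal[OF ideal] \<theta>_A)
      moreover have "\<exists>w' \<in> wplus A. (w, w') \<in> (rstep V)\<^sup>*"
        by (rule rtrancl_rstep_into_wplus[where C = "B - B0", OF left right])
          (use w False in \<open>simp_all add: wplus_def\<close>)
      ultimately show ?thesis
        by blast
    qed
  qed
qed

end
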